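(* For all $n\ge 1$, $|F_n(321,31524)|=\dfrac{P_n+P_{n-1}+1}{2}$, where $P_n$ are the Pell numbers: $P_0=0$, $P_1=1$, $P_n=2P_{n-1}+P_{n-2}$ for $n\ge2$.
   Context: A permutation $\pi$ avoids a classical pattern $p\in S_k$ if no subsequence of $\pi$ of length $k$ is order-isomorphic to $p$. A Fishburn permutation is a permutation $\pi=\pi_1\cdots\pi_n$ of $[n]$ for which there are no indices $i<j$ with $\pi_j<\pi_i<\pi_{i+1}$ and $\pi_i=\pi_j+1$. $F_n(\sigma_1,\dots,\sigma_k)$ denotes the set of Fishburn permutations of length $n$ avoiding each of the classical patterns $\sigma_1,\dots,\sigma_k$. *)

theory Defs
  imports Complex_Main
begin

definition is_perm :: "nat \<Rightarrow> nat list \<Rightarrow> bool" where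
  "is_perm n p \<longleftrightarrow> length p = n \<and> distinct p \<and> set p = {1..n}"

definition contains :: "nat list \<Rightarrow> nat list \<Rightarrow> bool" where
  "contains p q \<longleftrightarrow> (\<exists>idx :: nat list. length idx = length q \<and> sorted_wrt (<) idx
      \<and> (\<forall>i \<in> set idx. i < length p)
      \<and> (\<forall>a < length q. \<forall>b < length q. (p ! (idx ! a) < p ! (idx ! b)) \<longleftrightarrow> (q ! a < q ! b)))"

definition avoids :: "nat list \<Rightarrow> nat list \<Rightarrow> bool" where
  "avoids p q \<longleftrightarrow> \<not> contains p q"

definition fishburn :: "nat list \<Rightarrow> bool" where
  "fishburn p \<longleftrightarrow> \<not> (\<exists>i j. i < j \<and> j < length p \<and> Suc i < length p \<and>
      p ! j < p ! i \<and> p ! i < p ! Suc i \<and> p ! i = p ! j + 1)"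

definition F :: "nat \<Rightarrow> nat list list \<Rightarrow> nat list set" where
  "F n pats = {p. is_perm n p \<and> fishburn p \<and> (\<forall>q \<in> set pats. avoids p q)}"

fun pell :: "nat \<Rightarrow> nat" where
  "pell 0 = 0"
| "pell (Suc 0) = 1"
| "pell (Suc (Suc n)) = 2 * pell (Suc n) + pell n"

end

theory Submission
  imports Defs "HOL-Library.Sublist"
begin

(* Split F_n(321, 31524) by the first letter k. Since both patterns are sum-indecomposable,
   the permutations 1 (+) s and 21 (+) s contribute |F_(n-1)| and |F_(n-2)|. For k >= 3,
   the Fishburn condition and 321-avoidance force the second letter to be 1, and avoiding
   both patterns forces the third letter to be 2 or k + 1. The permutations 312 (+) s
   contribute |F_(n-3)|; for k12... (k >= 4) and for k1(k+1)..., deleting the third letter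
   and standardizing is a bijection onto the permutations of length n - 1 with first letter
   at least 3, because it contracts a pair of consecutive values that no occurrence of
   either pattern can use. With a_n = |F_n| and t_n the number of those with first letter
   at least 3, this gives a_n = a_(n-1) + a_(n-2) + t_n and t_n = a_(n-3) + 2 t_(n-1),
   whose solution is 2 a_n = P_n + P_(n-1) + 1. *)

section \<open>Pattern occurrences\<close>

definition order_iso :: "nat list \<Rightarrow> nat list \<Rightarrow> bool" where
  "order_iso s q \<longleftrightarrow> length s = length q \<and>
     (\<forall>i < length q. \<forall>j < length q. s ! i < s ! j \<longleftrightarrow> q ! i < q ! j)"

lemma order_iso_less_iff:
  "order_iso s q \<Longrightarrow> i < length s \<Longrightarrow> j < length s \<Longrightarrow> s ! i < s ! j \<longleftrightarrow> q ! i < q ! j"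
  by (simp add: order_iso_def)

lemma subseq_map_nth:
  assumes "sorted_wrt (<) idx" "\<forall>i \<in> set idx. i < length p"
  shows "subseq (map ((!) p) idx) p"
  using assms
proof (induction p arbitrary: idx)
  case Nil
  then show ?case by (cases idx) auto
next
  case (Cons x p)
  let ?idx' = "map (\<lambda>j. j - 1) (filter (\<lambda>j. 0 < j) idx)"
  have "sorted_wrt (<) (filter (\<lambda>j. 0 < j) idx)"
    using Cons.prems(1) by (rule sorted_wrt_filter)
  then have IH: "subseq (map ((!) p) ?idx') p"
    using Cons.prems(2)
    by (intro Cons.IH) (auto simp: sorted_wrt_map elim!: sorted_wrt_mono_rel[rotated])
  have tail: "map ((!) (x # p)) (filter (\<lambda>j. 0 < j) idx) = map ((!) p) ?idx'"
    by (auto simp: nth_Cons')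
  show ?case
  proof (cases "0 \<in> set idx")
    case True
    with Cons.prems(1) obtain js where "idx = 0 # js" "\<forall>j \<in> set js. 0 < j"
      by (cases idx) auto
    then have "map ((!) (x # p)) idx = x # map ((!) (x # p)) (filter (\<lambda>j. 0 < j) idx)"
      by (simp add: filter_id_conv)
    then show ?thesis using IH tail by simp
  next
    case False
    then have "filter (\<lambda>j. 0 < j) idx = idx" by (metis filter_id_conv gr0I)
    then show ?thesis using IH tail by (metis list_emb_Cons)
  qed
qed

lemma subseq_obtain_indices:
  assumes "subseq s p"
  obtains idx where "sorted_wrt (<) idx" "\<forall>i \<in> set idx. i < length p" "s = map ((!) p) idx"
  using assms
proof (induction arbitrary: thesis rule: list_emb.induct)
  case (list_emb_Nil ys)
  show ?case by (rule list_emb_Nil.prems[of "[]"]) simp_all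
next
  case (list_emb_Cons xs ys y)
  show ?case
    by (rule list_emb_Cons.IH)
      (rule list_emb_Cons.prems[of "map Suc idx" for idx]; auto simp: sorted_wrt_map o_def)
next
  case (list_emb_Cons2 x y xs ys)
  show ?case
    by (rule list_emb_Cons2.IH)
      (rule list_emb_Cons2.prems[of "0 # map Suc idx" for idx];
        use list_emb_Cons2.hyps(1) in \<open>auto simp: sorted_wrt_map o_def\<close>)
qed

lemma contains_iff_subseq: "contains p q \<longleftrightarrow> (\<exists>s. subseq s p \<and> order_iso s q)"
proof
  assume "contains p q"
  then obtain idx where "length idx = length q" "sorted_wrt (<) idx" "\<forall>i \<in> set idx. i < length p"
    "\<forall>a < length q. \<forall>b < length q. p ! (idx ! a) < p ! (idx ! b) \<longleftrightarrow> q ! a < q ! b"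
    unfolding contains_def by blast
  then show "\<exists>s. subseq s p \<and> order_iso s q"
    by (intro exI[of _ "map ((!) p) idx"]) (simp add: subseq_map_nth order_iso_def)
next
  assume "\<exists>s. subseq s p \<and> order_iso s q"
  then obtain s where "subseq s p" "order_iso s q" by blast
  then show "contains p q"
    unfolding contains_def order_iso_def by (elim subseq_obtain_indices) (intro exI; auto)
qed

lemma set_mono_subseq: "subseq xs ys \<Longrightarrow> set xs \<subseteq> set ys"
  by (induction rule: list_emb.induct) auto

lemma subseq_map_rightE:
  assumes "subseq s (map f xs)"
  obtains s' where "subseq s' xs" "s = map f s'"
proof -
  obtain idx where "sorted_wrt (<) idx" "\<forall>i \<in> set idx. i < length xs" "s = map ((!) (map f xs)) idx"
    using assms by (auto elim: subseq_obtain_indices)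
  then show thesis
    by (intro that[of "map ((!) xs) idx"]) (auto simp: subseq_map_nth)
qed

lemma contains_subseq_trans: "contains p q \<Longrightarrow> subseq p p' \<Longrightarrow> contains p' q"
  unfolding contains_iff_subseq using subseq_order.order_trans by blast

lemma contains_length_le: "contains p q \<Longrightarrow> length q \<le> length p"
  unfolding contains_iff_subseq order_iso_def by (auto dest: list_emb_length)

lemma order_iso_map_iff:
  assumes "strict_mono_on A f" "set s \<subseteq> A"
  shows "order_iso (map f s) q \<longleftrightarrow> order_iso s q"
  using assms unfolding order_iso_def by (auto simp: strict_mono_on_less subsetD)

lemma contains_map_iff:
  assumes "strict_mono_on (set p) f"
  shows "contains (map f p) q \<longleftrightarrow> contains p q"
proof
  assume "contains (map f p) q"
  then obtain s where "subseq s (map f p)" "order_iso s q"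
    unfolding contains_iff_subseq by blast
  then obtain s' where "subseq s' p" "order_iso (map f s') q"
    by (auto elim: subseq_map_rightE)
  then show "contains p q"
    using assms order_iso_map_iff set_mono_subseq unfolding contains_iff_subseq by blast
next
  assume "contains p q"
  then obtain s where "subseq s p" "order_iso s q"
    unfolding contains_iff_subseq by blast
  moreover from this have "order_iso (map f s) q"
    using assms order_iso_map_iff set_mono_subseq by blast
  ultimately show "contains (map f p) q"
    unfolding contains_iff_subseq using subseq_map by blast
qed

definition sum_indecomposable :: "nat list \<Rightarrow> bool" where
  "sum_indecomposable q \<longleftrightarrow>
     (\<forall>k. 0 < k \<longrightarrow> k < length q \<longrightarrow> (\<exists>x \<in> set (take k q). \<exists>y \<in> set (drop k q). y < x))"

lemma order_iso_sum_indecomposable: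
  assumes "order_iso s q" "sum_indecomposable q"
  shows "sum_indecomposable s"
  unfolding sum_indecomposable_def
proof (intro allI impI)
  fix k assume k: "0 < k" "k < length s"
  moreover have "k < length q" using k assms(1) by (simp add: order_iso_def)
  ultimately obtain x y where "x \<in> set (take k q)" "y \<in> set (drop k q)" "y < x"
    using assms(2) unfolding sum_indecomposable_def by blast
  then obtain i j where "i < k" "k \<le> j" "j < length q" "q ! j < q ! i"
    by (auto simp: in_set_conv_nth) (metis add.commute le_add1 less_diff_conv)
  moreover have "take k s ! i \<in> set (take k s)" "drop k s ! (j - k) \<in> set (drop k s)"
    using \<open>i < k\<close> \<open>k \<le> j\<close> \<open>j < length q\<close> k assms(1)
    by (intro nth_mem; simp add: order_iso_def)+
  ultimately have "s ! i \<in> set (take k s)" "s ! j \<in> set (drop k s)" "s ! j < s ! i"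
    using assms(1) k unfolding order_iso_def by auto
  then show "\<exists>x \<in> set (take k s). \<exists>y \<in> set (drop k s). y < x" by blast
qed

lemma contains_append_iff:
  assumes sep: "\<forall>x \<in> set A. \<forall>y \<in> set B. x < y" and "sum_indecomposable q"
  shows "contains (A @ B) q \<longleftrightarrow> contains A q \<or> contains B q"
proof
  assume "contains (A @ B) q"
  then obtain s where "subseq s (A @ B)" "order_iso s q"
    unfolding contains_iff_subseq by blast
  moreover from this obtain s1 s2 where s: "s = s1 @ s2" "subseq s1 A" "subseq s2 B"
    by (auto elim: subseq_appendE)
  moreover have "s1 = [] \<or> s2 = []"
  proof (rule ccontr)
    assume "\<not> (s1 = [] \<or> s2 = [])"
    then have "0 < length s1" "length s1 < length s" using s(1) by auto
    moreover have "sum_indecomposable s"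
      using \<open>order_iso s q\<close> assms(2) by (rule order_iso_sum_indecomposable)
    ultimately obtain x y where "x \<in> set (take (length s1) s)" "y \<in> set (drop (length s1) s)" "y < x"
      unfolding sum_indecomposable_def by blast
    then have "x \<in> set s1" "y \<in> set s2" "y < x" using s(1) by auto
    with s sep show False using set_mono_subseq by (meson less_asym subsetD)
  qed
  ultimately show "contains A q \<or> contains B q"
    unfolding contains_iff_subseq by auto
next
  assume "contains A q \<or> contains B q"
  then show "contains (A @ B) q"
    by (meson contains_subseq_trans subseq_drop_many subseq_rev_drop_many subseq_order.order_refl)
qed

definition value_between :: "nat list \<Rightarrow> nat \<Rightarrow> nat \<Rightarrow> bool" where
  "value_between q i j \<longleftrightarrow> (\<exists>x \<in> set q. q ! i < x \<and> x < q ! j)"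

definition no_ascending_bond :: "nat list \<Rightarrow> bool" where
  "no_ascending_bond q \<longleftrightarrow>
     (\<forall>i. Suc i < length q \<longrightarrow> q ! i < q ! Suc i \<longrightarrow> value_between q i (Suc i))"

lemma order_iso_value_between_iff:
  assumes "order_iso s q" "i < length q" "j < length q"
  shows "value_between s i j \<longleftrightarrow> value_between q i j"
  using assms unfolding value_between_def order_iso_def by (metis in_set_conv_nth)

lemma order_iso_Suc_not_value_between:
  assumes "order_iso s q" "i < length s" "j < length s" "s ! j = Suc (s ! i)"
  shows "\<not> value_between q i j"
proof
  assume "value_between q i j"
  then have "value_between s i j"
    using assms order_iso_value_between_iff[OF assms(1)] by (simp add: order_iso_def)
  then show False using assms(4) by (auto simp: value_between_def)
qed

lemma order_iso_replace:
  assumes "order_iso (xs @ b # ys) q"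
    and "\<forall>x \<in> set (xs @ ys). (x < a \<longleftrightarrow> x < b) \<and> (a < x \<longleftrightarrow> b < x)"
  shows "order_iso (xs @ a # ys) q"
proof -
  let ?s = "xs @ b # ys" and ?s' = "xs @ a # ys"
  have same: "?s' ! j = ?s ! j" "?s ! j \<in> set (xs @ ys)"
    if "j < length ?s" "j \<noteq> length xs" for j
    using that by (auto simp: nth_append nth_Cons' split: nat.split)
  have "?s' ! i < ?s' ! j \<longleftrightarrow> ?s ! i < ?s ! j" if "i < length ?s" "j < length ?s" for i j
    using that same[of i] same[of j] assms(2)
    by (cases "i = length xs"; cases "j = length xs") auto
  then show ?thesis using assms(1) unfolding order_iso_def by simp
qed

lemma order_iso_replace_Suc:
  assumes "order_iso (xs @ Suc a # ys) q" "a \<notin> set (xs @ ys)" "Suc a \<notin> set (xs @ ys)"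
  shows "order_iso (xs @ a # ys) q"
proof (rule order_iso_replace[OF assms(1)])
  show "\<forall>x \<in> set (xs @ ys). (x < a \<longleftrightarrow> x < Suc a) \<and> (a < x \<longleftrightarrow> Suc a < x)"
    using assms(2,3) by (metis Suc_lessD Suc_lessI less_Suc_eq)
qed

lemma subseq_two_cases: "subseq s [x, y] \<longleftrightarrow> s \<in> {[], [x], [y], [x, y]}"
  by (simp flip: in_set_subseqs) auto

(* An occurrence through a + 1 but not a can use a instead; one through both would map the
   adjacent entries a, a + 1 onto an ascent of q with no value in between. *)
lemma contains_contract_bond:
  assumes "contains (u @ a # Suc a # v) q" "a \<notin> set (u @ v)" "Suc a \<notin> set (u @ v)"
    and "no_ascending_bond q"
  shows "contains (u @ a # v) q"
proof -
  obtain s where sub: "subseq s (u @ [a, Suc a] @ v)" and iso: "order_iso s q"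
    using assms(1) unfolding contains_iff_subseq by auto
  from sub obtain s1 s23 where "s = s1 @ s23" "subseq s1 u" "subseq s23 ([a, Suc a] @ v)"
    by (rule subseq_appendE)
  moreover from this(3) obtain s2 s3 where "s23 = s2 @ s3" "subseq s2 [a, Suc a]" "subseq s3 v"
    by (rule subseq_appendE)
  ultimately have s: "s = s1 @ s2 @ s3" "subseq s1 u" "subseq s2 [a, Suc a]" "subseq s3 v"
    by simp_all
  have others: "set (s1 @ s3) \<subseteq> set (u @ v)"
    using s set_mono_subseq by fastforce
  from s(3) consider "s2 = []" | "s2 = [a]" | "s2 = [Suc a]" | "s2 = [a, Suc a]"
    unfolding subseq_two_cases by blast
  then show ?thesis
  proof cases
    case 3
    have "order_iso (s1 @ Suc a # s3) q" using iso s(1) 3 by simp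
    moreover have "a \<notin> set (s1 @ s3)" "Suc a \<notin> set (s1 @ s3)" using others assms(2,3) by blast+
    ultimately have "order_iso (s1 @ a # s3) q" by (rule order_iso_replace_Suc)
    moreover have "subseq (s1 @ a # s3) (u @ a # v)"
      using s by (simp add: list_emb_append_mono)
    ultimately show ?thesis unfolding contains_iff_subseq by auto
  next
    case 4
    let ?i = "length s1"
    have i: "Suc ?i < length s" "s ! ?i = a" "s ! Suc ?i = Suc a" using s(1) 4 by (auto simp: nth_append)
    then have "q ! ?i < q ! Suc ?i" using order_iso_less_iff[OF iso, of ?i "Suc ?i"] by simp
    moreover have "\<not> value_between q ?i (Suc ?i)"
      using i by (intro order_iso_Suc_not_value_between[OF iso]) auto
    ultimately show ?thesis
      using assms(4) i iso unfolding no_ascending_bond_def order_iso_def by auto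
  qed (use s iso in \<open>auto simp: contains_iff_subseq intro!: exI[of _ s] list_emb_append_mono\<close>)
qed

lemma subseq_three_cases:
  "subseq s [x, y, z] \<longleftrightarrow> s \<in> {[], [x], [y], [z], [x, y], [x, z], [y, z], [x, y, z]}"
  by (simp flip: in_set_subseqs add: Let_def) auto

(* As above; an occurrence through a + 1 and a or m starts with an ascent, or maps a, a + 1
   onto entries 0 and 2 of q with no value in between. *)
lemma contains_contract_split_bond:
  assumes "contains (a # m # Suc a # v) q" "a \<notin> set v" "Suc a \<notin> set v" "m \<le> a"
    and "q ! 1 < q ! 0" and "2 < length q \<longrightarrow> q ! 0 < q ! 2 \<longrightarrow> value_between q 0 2"
  shows "contains (a # m # v) q"
proof -
  obtain s where sub: "subseq s ([a, m, Suc a] @ v)" and iso: "order_iso s q"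
    using assms(1) unfolding contains_iff_subseq by auto
  from sub obtain s2 s3 where s: "s = s2 @ s3" "subseq s2 [a, m, Suc a]" "subseq s3 v"
    by (rule subseq_appendE)
  have ascent: "\<not> s ! 0 < s ! 1" if "1 < length s"
    using order_iso_less_iff[OF iso, of 0 1] that assms(5) by (cases s) auto
  from s(2) consider "subseq s2 [a, m]" | "s2 = [Suc a]" | "s2 = [a, Suc a]" | "s2 = [m, Suc a]"
    | "s2 = [a, m, Suc a]"
    unfolding subseq_three_cases subseq_two_cases by blast
  then show ?thesis
  proof cases
    case 1
    then have "subseq s ([a, m] @ v)" using s by (simp only: list_emb_append_mono)
    then show ?thesis using iso unfolding contains_iff_subseq by auto
  next
    case 2
    have "order_iso ([] @ Suc a # s3) q" using iso s(1) 2 by simp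
    moreover have "set s3 \<subseteq> set v" using s(3) by (rule set_mono_subseq)
    then have "a \<notin> set ([] @ s3)" "Suc a \<notin> set ([] @ s3)" using assms(2,3) by auto
    ultimately have "order_iso ([] @ a # s3) q" by (rule order_iso_replace_Suc)
    moreover have "subseq (a # s3) (a # m # v)" using s(3) by (simp add: list_emb_Cons)
    ultimately show ?thesis unfolding contains_iff_subseq by auto
  next
    case 5
    have "2 < length q" "q ! 0 < q ! 2"
      using order_iso_less_iff[OF iso, of 0 2] iso s(1) 5 by (auto simp: order_iso_def)
    moreover have "\<not> value_between q 0 2"
      using s(1) 5 by (intro order_iso_Suc_not_value_between[OF iso]) auto
    ultimately show ?thesis using assms(6) by blast
  qed (use ascent s assms(4) in auto)
qed

section \<open>Fishburn permutations\<close>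

lemma fishburn_Nil [simp]: "fishburn []"
  by (simp add: fishburn_def)

lemma fishburn_Cons:
  "fishburn (x # xs) \<longleftrightarrow>
     ((xs \<noteq> [] \<and> x < hd xs) \<longrightarrow> (\<forall>z \<in> set xs. Suc z \<noteq> x)) \<and> fishburn xs"
proof -
  define p where "p = x # xs"
  define bad where "bad i j \<longleftrightarrow> i < j \<and> j < length p \<and> Suc i < length p \<and>
      p ! j < p ! i \<and> p ! i < p ! Suc i \<and> p ! i = p ! j + 1" for i j
  have "(\<exists>i j. bad i j) \<longleftrightarrow> (\<exists>j. bad 0 (Suc j)) \<or> (\<exists>i j. bad (Suc i) (Suc j))"
  proof
    assume "\<exists>i j. bad i j"
    then obtain i j where "bad i j" by blast
    moreover from this obtain j' where "j = Suc j'" by (cases j) (auto simp: bad_def)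
    ultimately show "(\<exists>j. bad 0 (Suc j)) \<or> (\<exists>i j. bad (Suc i) (Suc j))"
      by (cases i) blast+
  qed blast
  moreover have "(\<exists>j. bad 0 (Suc j)) \<longleftrightarrow> xs \<noteq> [] \<and> x < hd xs \<and> (\<exists>z \<in> set xs. Suc z = x)"
    by (auto simp: bad_def p_def in_set_conv_nth hd_conv_nth)
  moreover have "(\<exists>i j. bad (Suc i) (Suc j)) \<longleftrightarrow> \<not> fishburn xs"
    unfolding fishburn_def bad_def p_def by auto
  moreover have "fishburn (x # xs) \<longleftrightarrow> \<not> (\<exists>i j. bad i j)"
    unfolding fishburn_def bad_def p_def ..
  ultimately show ?thesis by blast
qed

lemma fishburn_map_iff:
  assumes "strict_mono_on (set xs) f" "\<forall>x \<in> set xs. \<forall>y \<in> set xs. f y = Suc (f x) \<longleftrightarrow> y = Suc x"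
  shows "fishburn (map f xs) \<longleftrightarrow> fishburn xs"
  using assms
proof (induction xs)
  case (Cons x xs)
  have "strict_mono_on (set xs) f"
    using Cons.prems(1) by (rule monotone_on_subset) auto
  with Cons have IH: "fishburn (map f xs) \<longleftrightarrow> fishburn xs" by simp
  have "(map f xs \<noteq> [] \<and> f x < hd (map f xs)) \<longleftrightarrow> (xs \<noteq> [] \<and> x < hd xs)"
    using Cons.prems(1) by (cases xs) (simp_all add: strict_mono_on_less)
  moreover have "Suc (f z) = f x \<longleftrightarrow> Suc z = x" if "z \<in> set xs" for z
    using Cons.prems(2) that by auto
  then have "(\<forall>z \<in> set (map f xs). Suc z \<noteq> f x) \<longleftrightarrow> (\<forall>z \<in> set xs. Suc z \<noteq> x)"
    by auto
  ultimately show ?case using IH by (simp only: fishburn_Cons list.map)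
qed simp

lemma fishburn_append_iff:
  assumes "\<forall>x \<in> set A. \<forall>y \<in> set B. x < y"
  shows "fishburn (A @ B) \<longleftrightarrow> fishburn A \<and> fishburn B"
  using assms
proof (induction A)
  case (Cons a A)
  have "\<forall>z \<in> set B. Suc z \<noteq> a" using Cons.prems by fastforce
  with Cons show ?case by (cases A) (auto simp: fishburn_Cons)
qed simp

lemma mem_F_iff:
  "p \<in> F n pats \<longleftrightarrow> length p = n \<and> distinct p \<and> set p \<subseteq> {1..n} \<and> fishburn p
     \<and> (\<forall>q \<in> set pats. \<not> contains p q)"
proof -
  have "set p = {1..n}" if "length p = n" "distinct p" "set p \<subseteq> {1..n}"
    using that by (metis card_atLeastAtMost card_subset_eq diff_Suc_1 distinct_card finite_atLeastAtMost)
  then show ?thesis unfolding F_def is_perm_def avoids_def by auto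
qed

lemma mem_FD:
  assumes "p \<in> F n pats"
  shows "length p = n" "distinct p" "set p = {1..n}" "fishburn p" "\<And>q. q \<in> set pats \<Longrightarrow> \<not> contains p q"
  using assms unfolding F_def is_perm_def avoids_def by auto

lemma mem_F_bounds: "p \<in> F n pats \<Longrightarrow> v \<in> set p \<Longrightarrow> 1 \<le> v \<and> v \<le> n"
  using mem_FD(3) by fastforce

lemma finite_F: "finite (F n pats)"
proof (rule finite_subset)
  show "F n pats \<subseteq> {p. set p \<subseteq> {1..n} \<and> length p = n}"
    by (auto dest: mem_FD)
qed (rule finite_lists_length_eq, simp)

lemma shift_append_mem_F_iff:
  assumes c: "c \<in> F m pats" and indec: "\<forall>q \<in> set pats. sum_indecomposable q"
  shows "c @ map (\<lambda>v. v + m) \<sigma> \<in> F (m + l) pats \<longleftrightarrow> \<sigma> \<in> F l pats"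
proof -
  let ?\<sigma>' = "map (\<lambda>v. v + m) \<sigma>"
  note cD = mem_FD[OF c]
  have mono: "strict_mono_on A (\<lambda>v. v + m)" for A
    by (auto intro: strict_mono_onI)
  have "c @ ?\<sigma>' \<in> F (m + l) pats \<longleftrightarrow> \<sigma> \<in> F l pats" if "0 \<notin> set \<sigma>"
  proof -
    have pos: "\<forall>v \<in> set \<sigma>. 0 < v" using that by (metis gr0I)
    then have sep: "\<forall>x \<in> set c. \<forall>y \<in> set ?\<sigma>'. x < y"
      using cD(3) by fastforce
    have "distinct (c @ ?\<sigma>') \<longleftrightarrow> distinct \<sigma>"
      using sep cD(2) by (auto simp: distinct_map inj_on_def)
    moreover have "set (c @ ?\<sigma>') \<subseteq> {1..m + l} \<longleftrightarrow> set \<sigma> \<subseteq> {1..l}"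
      using pos cD(3) by (auto simp: subset_iff)
    moreover have "fishburn (c @ ?\<sigma>') \<longleftrightarrow> fishburn \<sigma>"
      using sep cD(4) fishburn_map_iff[OF mono] by (simp add: fishburn_append_iff)
    moreover have "contains (c @ ?\<sigma>') q \<longleftrightarrow> contains \<sigma> q" if "q \<in> set pats" for q
      using that sep cD(5) indec contains_map_iff[OF mono] by (simp add: contains_append_iff)
    ultimately show ?thesis using cD(1) by (simp add: mem_F_iff)
  qed
  moreover have "0 \<notin> set \<sigma>" if "c @ ?\<sigma>' \<in> F (m + l) pats"
  proof
    assume "0 \<in> set \<sigma>"
    then have "m \<in> set ?\<sigma>'" by force
    moreover from this have "m \<in> set c"
      using mem_FD(3)[OF that] cD(3) by auto
    ultimately show False using mem_FD(2)[OF that] by auto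
  qed
  moreover have "0 \<notin> set \<sigma>" if "\<sigma> \<in> F l pats"
    using mem_FD(3)[OF that] by auto
  ultimately show ?thesis by blast
qed

definition prefixed :: "nat list \<Rightarrow> nat list set \<Rightarrow> nat list set" where
  "prefixed c A = {p \<in> A. \<exists>r. p = c @ r}"

lemma card_prefixed_F:
  assumes c: "c \<in> F m pats" and indec: "\<forall>q \<in> set pats. sum_indecomposable q"
  shows "card (prefixed c (F (m + l) pats)) = card (F l pats)"
proof -
  let ?f = "\<lambda>\<sigma>. c @ map (\<lambda>v. v + m) \<sigma>"
  have "prefixed c (F (m + l) pats) \<subseteq> ?f ` F l pats"
  proof
    fix p assume "p \<in> prefixed c (F (m + l) pats)"
    then obtain r where p: "p \<in> F (m + l) pats" "p = c @ r" unfolding prefixed_def by blast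
    have "\<forall>v \<in> set r. m < v"
    proof
      fix v assume "v \<in> set r"
      then have "v \<in> {1..m + l}" "v \<notin> set c" using mem_FD(2,3)[OF p(1)] p(2) by auto
      then show "m < v" using mem_FD(3)[OF c] by auto
    qed
    then have r: "r = map (\<lambda>v. v + m) (map (\<lambda>v. v - m) r)"
      by (induction r) auto
    then show "p \<in> ?f ` F l pats"
      using p shift_append_mem_F_iff[OF c indec] by (metis image_eqI)
  qed
  moreover have "?f ` F l pats \<subseteq> prefixed c (F (m + l) pats)"
    using shift_append_mem_F_iff[OF c indec] by (auto simp: prefixed_def)
  moreover have "inj_on ?f (F l pats)"
    by (auto simp: inj_on_def inj_map_eq_map inj_def)
  ultimately show ?thesis by (metis card_image subset_antisym)
qed

section \<open>Fishburn permutations avoiding 321 and 31524\<close>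

abbreviation avoiders :: "nat \<Rightarrow> nat list set" where
  "avoiders n \<equiv> F n [[3,2,1], [3,1,5,2,4]]"

lemma patterns_321_31524:
  assumes "q \<in> set [[3,2,1], [3,1,5,2,4]]"
  shows "sum_indecomposable q" "no_ascending_bond q" "q ! 1 < q ! 0"
    "2 < length q \<longrightarrow> q ! 0 < q ! 2 \<longrightarrow> value_between q 0 2"
  using assms
  by (auto simp: sum_indecomposable_def no_ascending_bond_def value_between_def less_Suc_eq
      numeral_eq_Suc)

lemma contains_321I: "subseq [a, b, c] p \<Longrightarrow> c < b \<Longrightarrow> b < a \<Longrightarrow> contains p [3,2,1]"
  unfolding contains_iff_subseq order_iso_def
  by (rule exI[of _ "[a, b, c]"]) (auto simp: less_Suc_eq numeral_eq_Suc)

lemma contains_31524I: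
  "subseq [a, b, c, d, e] p \<Longrightarrow> b < d \<Longrightarrow> d < a \<Longrightarrow> a < e \<Longrightarrow> e < c \<Longrightarrow> contains p [3,1,5,2,4]"
  unfolding contains_iff_subseq order_iso_def
  by (rule exI[of _ "[a, b, c, d, e]"]) (auto simp: less_Suc_eq numeral_eq_Suc)

lemma avoiders_small_members: "[1] \<in> avoiders 1" "[2,1] \<in> avoiders 2" "[3,1,2] \<in> avoiders 3"
proof -
  have "\<not> contains [3,1,2] [3,2,1]"
  proof
    assume "contains [3,1,2] [3,2,1]"
    then obtain s where "subseq s [3,1,2]" "order_iso s [3,2,1]"
      unfolding contains_iff_subseq by blast
    moreover from this have "s = [3,1,2]"
      by (intro subseq_same_length) (auto simp: order_iso_def)
    ultimately show False
      using order_iso_less_iff[of s "[3,2,1]" 1 2] by simp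
  qed
  then show "[1] \<in> avoiders 1" "[2,1] \<in> avoiders 2" "[3,1,2] \<in> avoiders 3"
    by (auto simp: mem_F_iff fishburn_Cons dest: contains_length_le)
qed

lemma subseq_pair_cases: "x \<in> set L \<Longrightarrow> y \<in> set L \<Longrightarrow> x \<noteq> y \<Longrightarrow> subseq [x, y] L \<or> subseq [y, x] L"
  by (induction L) (auto simp: subseq_singleton_left)

lemma avoiders_second_letter:
  assumes p: "k # xs \<in> avoiders n" and k: "2 \<le> k"
  obtains ys where "xs = 1 # ys"
proof -
  note D = mem_FD[OF p]
  have "k \<le> n" using D(3) by auto
  then have "1 \<in> set (k # xs)" "k - 1 \<in> set (k # xs)" unfolding D(3) using k by auto
  then have "1 \<in> set xs" "k - 1 \<in> set xs" using k by auto
  then obtain z ys where xs: "xs = z # ys" by (cases xs) auto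
  have "z < k"
  proof (rule ccontr)
    assume "\<not> z < k"
    then have "k < z" using D(2) xs by auto
    then show False
      using D(4) xs \<open>k - 1 \<in> set xs\<close> k by (auto simp: fishburn_Cons)
  qed
  have "z \<in> set (k # xs)" using xs by simp
  then have "1 \<le> z" unfolding D(3) by simp
  have "z = 1"
  proof (rule ccontr)
    assume "z \<noteq> 1"
    then have "1 < z" "1 \<in> set ys" using \<open>1 \<le> z\<close> xs \<open>1 \<in> set xs\<close> by auto
    then have "contains (k # xs) [3,2,1]"
      using \<open>z < k\<close> xs by (intro contains_321I[of k z 1]) (auto simp: subseq_singleton_left)
    then show False using D(5) by simp
  qed
  with xs show thesis using that by blast
qed

lemma avoiders_third_letter:
  assumes p: "k # 1 # ys \<in> avoiders n" and k: "3 \<le> k"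
  obtains y ws where "ys = y # ws" "y = 2 \<or> y = Suc k"
proof -
  note D = mem_FD[OF p]
  have "k \<le> n" using D(3) by auto
  then have "k - 1 \<in> set (k # 1 # ys)" "2 \<in> set (k # 1 # ys)" unfolding D(3) using k by auto
  then have "k - 1 \<in> set ys" using k by auto
  then obtain y ws where ys: "ys = y # ws" by (cases ys) auto
  have "y \<noteq> k" "y \<noteq> 1" "y \<le> n" using D(2,3) ys by auto
  have "y = 2 \<or> y = Suc k"
  proof (rule ccontr)
    assume y: "\<not> (y = 2 \<or> y = Suc k)"
    show False
    proof (cases "y < k")
      case True
      then have "2 \<in> set ws" "2 < y"
        using \<open>2 \<in> set (k # 1 # ys)\<close> ys y k \<open>y \<noteq> 1\<close> \<open>y \<noteq> k\<close> D(3) by auto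
      then have "contains (k # 1 # ys) [3,2,1]"
        using True ys by (intro contains_321I[of k y 2]) (auto simp: subseq_singleton_left)
      then show False using D(5) by simp
    next
      case False
      then have "Suc k < y" using y \<open>y \<noteq> k\<close> by auto
      moreover have "Suc k \<in> set (k # 1 # ys)"
        unfolding D(3) using \<open>Suc k < y\<close> \<open>y \<le> n\<close> by simp
      ultimately have "Suc k \<in> set ws" "k - 1 \<in> set ws"
        using ys \<open>k - 1 \<in> set ys\<close> k by auto
      then have "subseq [k - 1, Suc k] ws \<or> subseq [Suc k, k - 1] ws"
        by (intro subseq_pair_cases) auto
      then show False
      proof
        assume "subseq [k - 1, Suc k] ws"
        then have "contains (k # 1 # ys) [3,1,5,2,4]"
          using \<open>Suc k < y\<close> k ys by (intro contains_31524I[of k 1 y "k - 1" "Suc k"]) auto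
        then show False using D(5) by simp
      next
        assume "subseq [Suc k, k - 1] ws"
        then have "contains (k # 1 # ys) [3,2,1]"
          using \<open>Suc k < y\<close> ys by (intro contains_321I[of y "Suc k" "k - 1"]) auto
        then show False using D(5) by simp
      qed
    qed
  qed
  with ys show thesis by (rule that)
qed

section \<open>Inserting and deleting the third letter\<close>

definition shift_up :: "nat \<Rightarrow> nat \<Rightarrow> nat" where
  "shift_up c v = (if c \<le> v then Suc v else v)"

definition shift_down :: "nat \<Rightarrow> nat \<Rightarrow> nat" where
  "shift_down c v = (if c < v then v - 1 else v)"

definition insert_third :: "nat \<Rightarrow> nat list \<Rightarrow> nat list" where
  "insert_third c q = take 2 (map (shift_up c) q) @ c # drop 2 (map (shift_up c) q)"

definition delete_third :: "nat \<Rightarrow> nat list \<Rightarrow> nat list" where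
  "delete_third c p = map (shift_down c) (take 2 p @ drop 3 p)"

lemma insert_third_Cons_Cons [simp]:
  "insert_third c (a # b # r) = shift_up c a # shift_up c b # c # map (shift_up c) r"
  by (simp add: insert_third_def)

lemma delete_third_Cons_Cons_Cons [simp]:
  "delete_third c (a # b # d # r) = shift_down c a # shift_down c b # map (shift_down c) r"
  by (simp add: delete_third_def numeral_eq_Suc)

lemma shift_down_shift_up [simp]: "shift_down c (shift_up c v) = v"
  by (simp add: shift_up_def shift_down_def)

lemma shift_up_shift_down: "v \<noteq> c \<Longrightarrow> shift_up c (shift_down c v) = v"
  by (auto simp: shift_up_def shift_down_def)

lemma shift_up_below: "v < c \<Longrightarrow> shift_up c v = v"
  by (simp add: shift_up_def)

lemma shift_down_below: "v \<le> c \<Longrightarrow> shift_down c v = v"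
  by (simp add: shift_down_def)

lemma shift_up_neq: "shift_up c v \<noteq> c"
  by (simp add: shift_up_def)

lemma strict_mono_on_shift_up: "strict_mono_on A (shift_up c)"
  by (rule strict_mono_onI) (auto simp: shift_up_def)

lemma strict_mono_on_shift_down:
  assumes "c \<notin> A"
  shows "strict_mono_on A (shift_down c)"
proof (rule strict_mono_onI)
  fix x y assume "x \<in> A" "y \<in> A" "x < y"
  with assms have "x \<noteq> c" "y \<noteq> c" by auto
  with \<open>x < y\<close> show "shift_down c x < shift_down c y" by (auto simp: shift_down_def)
qed

lemma shift_up_Suc_iff:
  assumes "c - 1 \<notin> A"
  shows "\<forall>x \<in> A. \<forall>y \<in> A. shift_up c y = Suc (shift_up c x) \<longleftrightarrow> y = Suc x"
proof (intro ballI)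
  fix x y assume "x \<in> A" "y \<in> A"
  with assms have "x \<noteq> c - 1" by auto
  then show "shift_up c y = Suc (shift_up c x) \<longleftrightarrow> y = Suc x" by (auto simp: shift_up_def)
qed

lemma shift_down_Suc_iff:
  assumes "c \<notin> A" "c - 1 \<notin> A"
  shows "\<forall>x \<in> A. \<forall>y \<in> A. shift_down c y = Suc (shift_down c x) \<longleftrightarrow> y = Suc x"
proof (intro ballI)
  fix x y assume "x \<in> A" "y \<in> A"
  with assms have "x \<noteq> c" "y \<noteq> c" "x \<noteq> c - 1" by auto
  then show "shift_down c y = Suc (shift_down c x) \<longleftrightarrow> y = Suc x" by (auto simp: shift_down_def)
qed

lemma insert_third_mem_F:
  assumes q: "j # 1 # r \<in> F n pats" and c: "2 \<le> c" "c \<le> Suc n" "c - 1 \<notin> set r"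
    and contract: "\<And>q. q \<in> set pats \<Longrightarrow> contains (insert_third c (j # 1 # r)) q \<Longrightarrow>
      contains (map (shift_up c) (j # 1 # r)) q"
  shows "insert_third c (j # 1 # r) \<in> F (Suc n) pats"
proof -
  note D = mem_FD[OF q]
  let ?u = "shift_up c"
  have "2 \<le> v \<and> v \<le> n" if "v \<in> set (j # r)" for v
  proof -
    have "1 \<le> v \<and> v \<le> n" using that mem_F_bounds[OF q, of v] by auto
    moreover have "v \<noteq> 1" using that D(2) by auto
    ultimately show ?thesis by auto
  qed
  then have vals: "\<forall>v \<in> set (j # r). 2 \<le> v \<and> v \<le> n" by blast
  have u1: "?u 1 = 1" using c by (simp add: shift_up_def)
  have "distinct (c # map ?u (j # 1 # r))"
    using D(2) strict_mono_on_shift_up[THEN strict_mono_on_imp_inj_on]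
    by (auto simp: distinct_map shift_up_neq shift_up_neq[symmetric])
  then have "distinct (insert_third c (j # 1 # r))" using u1 by auto
  moreover have "set (insert_third c (j # 1 # r)) \<subseteq> {1..Suc n}"
    using vals c u1 by (auto simp: shift_up_def)
  moreover have "fishburn (map ?u r)"
    using D(4) strict_mono_on_shift_up shift_up_Suc_iff[OF c(3)]
    by (simp add: fishburn_map_iff fishburn_Cons)
  then have "fishburn (insert_third c (j # 1 # r))"
    using vals c u1 by (auto simp: fishburn_Cons shift_up_def)
  moreover have "\<not> contains (insert_third c (j # 1 # r)) q" if "q \<in> set pats" for q
    using D(5)[OF that] contract[OF that] contains_map_iff[OF strict_mono_on_shift_up] by blast
  ultimately show ?thesis using D(1) by (simp add: mem_F_iff)
qed

lemma delete_third_mem_F: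
  assumes p: "a # 1 # c # r \<in> F (Suc n) pats" and c: "c - 1 \<notin> set r"
  shows "delete_third c (a # 1 # c # r) \<in> F n pats"
proof -
  note D = mem_FD[OF p]
  let ?d = "shift_down c"
  have "2 \<le> v \<and> v \<le> Suc n" if "v \<in> set (a # c # r)" for v
  proof -
    have "1 \<le> v \<and> v \<le> Suc n" using that mem_F_bounds[OF p, of v] by auto
    moreover have "v \<noteq> 1" using that D(2) by auto
    ultimately show ?thesis by auto
  qed
  then have vals: "\<forall>v \<in> set (a # r). 2 \<le> v \<and> v \<le> Suc n \<and> v \<noteq> c" "2 \<le> c" "c \<le> Suc n"
    using D(2) by auto
  have eq: "delete_third c (a # 1 # c # r) = map ?d (a # 1 # r)"
    using vals by (simp add: shift_down_def)
  have c_notin: "c \<notin> set (a # 1 # r)" using D(2) by auto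
  have "distinct (map ?d (a # 1 # r))"
    using D(2) strict_mono_on_shift_down[OF c_notin, THEN strict_mono_on_imp_inj_on]
    by (simp add: distinct_map)
  moreover have "set (map ?d (a # 1 # r)) \<subseteq> {1..n}"
  proof
    fix w assume "w \<in> set (map ?d (a # 1 # r))"
    then obtain v where v: "v \<in> set (a # 1 # r)" "w = ?d v" by auto
    then have "1 \<le> v" "v \<le> Suc n" "v \<noteq> c" using vals by auto
    with v(2) vals(2,3) show "w \<in> {1..n}" by (auto simp: shift_down_def)
  qed
  moreover have "fishburn (map ?d r)"
    using D(4) c_notin strict_mono_on_shift_down[of c "set r"] shift_down_Suc_iff[of c "set r"] c
    by (simp add: fishburn_map_iff fishburn_Cons)
  then have "fishburn (map ?d (a # 1 # r))"
    using vals by (auto simp: fishburn_Cons shift_down_def)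
  moreover have "\<not> contains (map ?d (a # 1 # r)) q" if "q \<in> set pats" for q
  proof
    assume "contains (map ?d (a # 1 # r)) q"
    then have "contains (a # 1 # r) q"
      using contains_map_iff[OF strict_mono_on_shift_down[OF c_notin]] by blast
    moreover have "subseq (a # 1 # r) (a # 1 # c # r)" by (simp add: list_emb_Cons)
    ultimately show False using D(5)[OF that] contains_subseq_trans by blast
  qed
  ultimately show ?thesis using D(1) eq by (simp add: mem_F_iff)
qed

lemma contains_insert_third_2:
  assumes "contains (insert_third 2 (j # 1 # r)) q" "2 \<le> j" "1 \<notin> set r" "no_ascending_bond q"
  shows "contains (map (shift_up 2) (j # 1 # r)) q"
proof -
  let ?r = "map (shift_up 2) r"
  have "insert_third 2 (j # 1 # r) = [Suc j] @ 1 # Suc 1 # ?r"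
    "map (shift_up 2) (j # 1 # r) = [Suc j] @ 1 # ?r"
    using assms(2) by (simp_all add: shift_up_def)
  moreover have "1 \<notin> set ([Suc j] @ ?r)" "Suc 1 \<notin> set ([Suc j] @ ?r)"
    using assms(2,3) shift_up_neq[of 2] by (auto simp: shift_up_def)
  ultimately show ?thesis using contains_contract_bond assms(1,4) by metis
qed

lemma contains_insert_third_succ:
  assumes "contains (insert_third (Suc j) (j # 1 # r)) q" "1 \<le> j" "j \<notin> set r"
    and "q ! 1 < q ! 0" "2 < length q \<longrightarrow> q ! 0 < q ! 2 \<longrightarrow> value_between q 0 2"
  shows "contains (map (shift_up (Suc j)) (j # 1 # r)) q"
proof -
  let ?r = "map (shift_up (Suc j)) r"
  have "insert_third (Suc j) (j # 1 # r) = j # 1 # Suc j # ?r"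
    "map (shift_up (Suc j)) (j # 1 # r) = j # 1 # ?r"
    using assms(2) by (simp_all add: shift_up_def)
  moreover have "j \<notin> set ?r" "Suc j \<notin> set ?r"
    using assms(3) shift_up_neq[of "Suc j"] by (auto simp: shift_up_def)
  ultimately show ?thesis
    using contains_contract_split_bond[of j 1 ?r q] assms by simp
qed

definition high_start :: "nat \<Rightarrow> nat list set" where
  "high_start n = {p \<in> avoiders n. \<exists>k r. 3 \<le> k \<and> p = k # r}"

definition high_start_12 :: "nat \<Rightarrow> nat list set" where
  "high_start_12 n = {p \<in> avoiders n. \<exists>k r. 4 \<le> k \<and> p = k # 1 # 2 # r}"

definition high_start_succ :: "nat \<Rightarrow> nat list set" where
  "high_start_succ n = {p \<in> avoiders n. \<exists>k r. 3 \<le> k \<and> p = k # 1 # Suc k # r}"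

lemma high_startE:
  assumes "q \<in> high_start m"
  obtains j r where "3 \<le> j" "q = j # 1 # r" "j # 1 # r \<in> avoiders m"
proof -
  obtain j xs where q: "q \<in> avoiders m" "3 \<le> j" "q = j # xs"
    using assms unfolding high_start_def by blast
  moreover have "2 \<le> j" using q(2) by simp
  ultimately obtain r where "xs = 1 # r"
    using avoiders_second_letter by blast
  with q show thesis using that by blast
qed

lemma map_shift_up_shift_down: "c \<notin> set r \<Longrightarrow> map (shift_up c \<circ> shift_down c) r = r"
  by (induction r) (auto simp: shift_up_shift_down)

lemma card_high_start_12: "card (high_start_12 (Suc m)) = card (high_start m)"
proof -
  have "bij_betw (insert_third 2) (high_start m) (high_start_12 (Suc m))"
  proof (rule bij_betw_byWitness[where f' = "delete_third 2"])
    show "\<forall>q \<in> high_start m. delete_third 2 (insert_third 2 q) = q"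
      by (auto elim!: high_startE simp: comp_def)
    show "\<forall>p \<in> high_start_12 (Suc m). insert_third 2 (delete_third 2 p) = p"
      by (auto simp: high_start_12_def shift_up_shift_down map_shift_up_shift_down dest!: mem_FD(2))
    show "insert_third 2 ` high_start m \<subseteq> high_start_12 (Suc m)"
    proof
      fix p assume "p \<in> insert_third 2 ` high_start m"
      then obtain j r where j: "3 \<le> j" "j # 1 # r \<in> avoiders m" "p = insert_third 2 (j # 1 # r)"
        by (auto elim!: high_startE)
      have "j \<le> m" "1 \<notin> set r" using mem_FD(2,3)[OF j(2)] by auto
      then have "p \<in> avoiders (Suc m)"
        unfolding j(3) using j(1) patterns_321_31524(2)
        by (intro insert_third_mem_F[OF j(2)] contains_insert_third_2) auto
      then show "p \<in> high_start_12 (Suc m)"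
        using j by (auto simp: high_start_12_def shift_up_def)
    qed
    show "delete_third 2 ` high_start_12 (Suc m) \<subseteq> high_start m"
    proof
      fix p assume "p \<in> delete_third 2 ` high_start_12 (Suc m)"
      then obtain k r where k: "4 \<le> k" "k # 1 # 2 # r \<in> avoiders (Suc m)"
        "p = delete_third 2 (k # 1 # 2 # r)"
        by (auto simp: high_start_12_def)
      have "1 \<notin> set r" using mem_FD(2)[OF k(2)] by auto
      then have "p \<in> avoiders m"
        unfolding k(3) using delete_third_mem_F[OF k(2)] by simp
      then show "p \<in> high_start m"
        using k by (auto simp: high_start_def shift_down_def)
    qed
  qed
  then show ?thesis by (simp add: bij_betw_same_card)
qed

lemma card_high_start_succ: "card (high_start_succ (Suc m)) = card (high_start m)"
proof -
  let ?f = "\<lambda>q. insert_third (Suc (hd q)) q" and ?g = "\<lambda>p. delete_third (Suc (hd p)) p"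
  have "bij_betw ?f (high_start m) (high_start_succ (Suc m))"
  proof (rule bij_betw_byWitness[where f' = ?g])
    show "\<forall>q \<in> high_start m. ?g (?f q) = q"
      by (auto elim!: high_startE simp: comp_def shift_up_below shift_down_below)
    show "\<forall>p \<in> high_start_succ (Suc m). ?f (?g p) = p"
      by (auto simp: high_start_succ_def shift_up_shift_down map_shift_up_shift_down
          shift_down_below shift_up_below dest!: mem_FD(2))
    show "?f ` high_start m \<subseteq> high_start_succ (Suc m)"
    proof
      fix p assume "p \<in> ?f ` high_start m"
      then obtain j r where j: "3 \<le> j" "j # 1 # r \<in> avoiders m"
        "p = insert_third (Suc j) (j # 1 # r)"
        by (auto elim!: high_startE)
      have "j \<le> m" "j \<notin> set r" using mem_FD(2,3)[OF j(2)] by auto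
      then have "p \<in> avoiders (Suc m)"
        unfolding j(3) using j(1) patterns_321_31524(3,4)
        by (intro insert_third_mem_F[OF j(2)] contains_insert_third_succ) auto
      then show "p \<in> high_start_succ (Suc m)"
        using j by (auto simp: high_start_succ_def shift_up_def)
    qed
    show "?g ` high_start_succ (Suc m) \<subseteq> high_start m"
    proof
      fix p assume "p \<in> ?g ` high_start_succ (Suc m)"
      then obtain k r where k: "3 \<le> k" "k # 1 # Suc k # r \<in> avoiders (Suc m)"
        "p = delete_third (Suc k) (k # 1 # Suc k # r)"
        by (auto simp: high_start_succ_def)
      have "k \<notin> set r" using mem_FD(2)[OF k(2)] by auto
      then have "p \<in> avoiders m"
        unfolding k(3) using delete_third_mem_F[OF k(2)] by simp
      then show "p \<in> high_start m"
        using k by (auto simp: high_start_def shift_down_def)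
    qed
  qed
  then show ?thesis by (simp add: bij_betw_same_card)
qed

section \<open>Counting\<close>

lemma card_Un3_disjoint:
  "finite A \<Longrightarrow> finite B \<Longrightarrow> finite C \<Longrightarrow> A \<inter> B = {} \<Longrightarrow> (A \<union> B) \<inter> C = {} \<Longrightarrow>
    card (A \<union> B \<union> C) = card A + card B + card C"
  by (simp add: card_Un_disjoint)

lemma avoiders_split:
  assumes "1 \<le> n"
  shows "avoiders n = prefixed [1] (avoiders n) \<union> prefixed [2,1] (avoiders n) \<union> high_start n"
proof (intro equalityI subsetI)
  fix p assume p: "p \<in> avoiders n"
  then obtain k xs where "p = k # xs"
    using mem_FD(1)[OF p] assms by (cases p) auto
  moreover have "1 \<le> k" using mem_FD(3)[OF p] \<open>p = k # xs\<close> by auto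
  ultimately consider "p = 1 # xs" | "p = 2 # xs" | "3 \<le> k" "p = k # xs" by force
  then show "p \<in> prefixed [1] (avoiders n) \<union> prefixed [2,1] (avoiders n) \<union> high_start n"
  proof cases
    case 2
    then obtain ys where "xs = 1 # ys" using p avoiders_second_letter by blast
    with 2 p show ?thesis by (auto simp: prefixed_def)
  qed (use p in \<open>auto simp: prefixed_def high_start_def\<close>)
qed (auto simp: prefixed_def high_start_def)

lemma high_start_split:
  "high_start n = prefixed [3,1,2] (avoiders n) \<union> high_start_12 n \<union> high_start_succ n"
proof (intro equalityI subsetI)
  fix p assume "p \<in> high_start n"
  then obtain k r where k: "3 \<le> k" "p = k # 1 # r" "p \<in> avoiders n"
    by (rule high_startE) simp
  then obtain y ws where "r = y # ws" "y = 2 \<or> y = Suc k"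
    using avoiders_third_letter by blast
  with k show "p \<in> prefixed [3,1,2] (avoiders n) \<union> high_start_12 n \<union> high_start_succ n"
    by (cases "k = 3") (auto simp: prefixed_def high_start_12_def high_start_succ_def)
qed (auto simp: prefixed_def high_start_def high_start_12_def high_start_succ_def)

lemma card_prefixed_avoiders:
  assumes "c \<in> avoiders m" "m \<le> n"
  shows "card (prefixed c (avoiders n)) = card (avoiders (n - m))"
  using card_prefixed_F[OF assms(1), of "n - m"] assms(2) patterns_321_31524(1) by simp

lemma card_avoiders_rec:
  assumes "2 \<le> n"
  shows "card (avoiders n) = card (avoiders (n - 1)) + card (avoiders (n - 2)) + card (high_start n)"
proof -
  have "card (avoiders n) =
      card (prefixed [1] (avoiders n) \<union> prefixed [2,1] (avoiders n) \<union> high_start n)"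
    using assms by (intro arg_cong[where f = card] avoiders_split) simp
  also have "\<dots> =
      card (prefixed [1] (avoiders n)) + card (prefixed [2,1] (avoiders n)) + card (high_start n)"
    using finite_F[of n] by (intro card_Un3_disjoint) (auto simp: prefixed_def high_start_def)
  finally show ?thesis
    using assms avoiders_small_members card_prefixed_avoiders by simp
qed

lemma card_high_start_rec:
  assumes "3 \<le> n"
  shows "card (high_start n) = card (avoiders (n - 3)) + 2 * card (high_start (n - 1))"
proof -
  have "card (high_start n) =
      card (prefixed [3,1,2] (avoiders n) \<union> high_start_12 n \<union> high_start_succ n)"
    by (intro arg_cong[where f = card] high_start_split)
  also have "\<dots> =
      card (prefixed [3,1,2] (avoiders n)) + card (high_start_12 n) + card (high_start_succ n)"
    using finite_F[of n]
    by (intro card_Un3_disjoint) (auto simp: prefixed_def high_start_12_def high_start_succ_def)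
  finally have "card (high_start n) =
      card (prefixed [3,1,2] (avoiders n)) + card (high_start_12 n) + card (high_start_succ n)" .
  moreover have "n = Suc (n - 1)" using assms by simp
  ultimately show ?thesis
    using assms avoiders_small_members card_prefixed_avoiders
      card_high_start_12[of "n - 1"] card_high_start_succ[of "n - 1"] by simp
qed

lemma card_avoiders_0: "card (avoiders 0) = 1"
proof -
  have "avoiders 0 = {[]}"
    by (auto simp: mem_F_iff dest!: contains_length_le)
  then show ?thesis by simp
qed

lemma card_avoiders_1: "card (avoiders 1) = 1"
proof -
  have "p = [1]" if "p \<in> avoiders 1" for p
    using mem_FD(1,3)[OF that] by (cases p) auto
  then have "avoiders 1 = {[1]}" using avoiders_small_members(1) by blast
  then show ?thesis by simp
qed

lemma high_start_small:
  assumes "n \<le> 2"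
  shows "high_start n = {}"
proof -
  have "k \<le> n" if "k # r \<in> avoiders n" for k r
    using mem_FD(3)[OF that] by (metis atLeastAtMost_iff list.set_intros(1))
  with assms show ?thesis by (fastforce simp: high_start_def)
qed

(* Since t n + 1 = a (n - 1), the system collapses to a (n + 2) + 1 = 2 a (n + 1) + a n,
   so 2 a n - 1 satisfies the Pell recurrence. *)
lemma pell_solution:
  fixes a t :: "nat \<Rightarrow> nat"
  assumes a01: "a 0 = 1" "a 1 = 1"
    and t_small: "\<And>n. n \<le> 2 \<Longrightarrow> t n = 0"
    and a_rec: "\<And>n. 2 \<le> n \<Longrightarrow> a n = a (n - 1) + a (n - 2) + t n"
    and t_rec: "\<And>n. 3 \<le> n \<Longrightarrow> t n = a (n - 3) + 2 * t (n - 1)"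
    and "1 \<le> n"
  shows "2 * a n = pell n + pell (n - 1) + 1"
proof -
  have t: "t n + 1 = a (n - 1)" if "1 \<le> n" for n
    using that
  proof (induction n)
    case (Suc n)
    show ?case
    proof (cases "Suc n \<le> 2")
      case False
      then show ?thesis
        using Suc.IH t_rec[of "Suc n"] a_rec[of n] by (simp add: numeral_eq_Suc)
    qed (use t_small a01 in \<open>auto simp: le_Suc_eq\<close>)
  qed simp
  have a: "a (Suc (Suc m)) + 1 = 2 * a (Suc m) + a m" for m
    using a_rec[of "Suc (Suc m)"] t[of "Suc (Suc m)"] by simp
  show ?thesis
    using assms(6)
  proof (induction n rule: pell.induct)
    case (3 m)
    show ?case
    proof (cases m)
      case 0
      then show ?thesis using a[of 0] a01 by simp
    next
      case Suc
      then show ?thesis using 3 a[of m] by (simp add: numeral_eq_Suc)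
    qed
  qed (use a01 in auto)
qed

theorem mainTheorem19:
  fixes n :: nat
  assumes "n \<ge> 1"
  shows "real (card (F n [[3,2,1],[3,1,5,2,4]])) = (real (pell n) + real (pell (n - 1)) + 1) / 2"
proof -
  have "2 * card (avoiders n) = pell n + pell (n - 1) + 1"
    using pell_solution[OF card_avoiders_0 card_avoiders_1 _
        card_avoiders_rec card_high_start_rec assms] high_start_small
    by simp
  then have "real (2 * card (avoiders n)) = real (pell n + pell (n - 1) + 1)"
    by (simp only:)
  then show ?thesis by simp
qed

end
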